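(* Let $n\ge1$, $I=\{1,\dots,n\}$, let $A=(a_{ij})_{n\times n}$ be a symmetric real matrix with $a_{ij}\ge0$ for all $i,j$, and let $\boldsymbol\beta=(\beta_1,\dots,\beta_n)$, $\beta_i>0$, satisfy $\Lambda_I(\boldsymbol\beta)=0$ and $\Lambda_J(\boldsymbol\beta)>0$ for all $\emptyset\ne J\subsetneq I$. Then $\mathcal F_0$ does not attain its infimum on $\Gamma^{\boldsymbol\beta}$.
   Context: For $\emptyset\ne J\subseteq I$, $\Lambda_J(\boldsymbol\beta)=\sum_{i\in J}\beta_i\big(8\pi-\sum_{j\in J}a_{ij}\beta_j\big)$. $\Gamma^{\boldsymbol\beta}$ is the set of $n$-tuples $\boldsymbol\rho=(\rho_1,\dots,\rho_n)$ of measurable functions on $\mathbb R^2$ with $\rho_i\ge0$, $\int\rho_i\ln\rho_i<\infty$, $\int|x|^2\rho_i<\infty$, $\int\rho_i=\beta_i$ for all $i$. $\mathcal F_0(\boldsymbol\rho)=\sum_{i=1}^n\int_{\mathbb R^2}\rho_i\ln\rho_i+\frac1{4\pi}\sum_{i,j=1}^na_{ij}\int\int\rho_i(x)\ln|x-y|\rho_j(y)\,d^2x\,d^2y+\sum_{i=1}^n\frac12\int_{\mathbb R^2}|x|^2\rho_i(x)\,d^2x.$ *)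

theory Defs
  imports "HOL-Analysis.Analysis"
begin

type_synonym R2 = "real^2"

definition Lambda :: "(nat \<Rightarrow> nat \<Rightarrow> real) \<Rightarrow> nat set \<Rightarrow> (nat \<Rightarrow> real) \<Rightarrow> real" where
  "Lambda a J \<beta> = (\<Sum>i\<in>J. \<beta> i * (8 * pi - (\<Sum>j\<in>J. a i j * \<beta> j)))"

definition Gamma :: "nat \<Rightarrow> (nat \<Rightarrow> real) \<Rightarrow> (nat \<Rightarrow> R2 \<Rightarrow> real) set" where
  "Gamma n \<beta> = {\<rho>. \<forall>i\<in>{1..n}.
      \<rho> i \<in> borel_measurable lborel \<and>
      (\<forall>x. 0 \<le> \<rho> i x) \<and>
      integrable lborel (\<lambda>x. \<rho> i x * ln (\<rho> i x)) \<and>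
      integrable lborel (\<lambda>x. (norm x)\<^sup>2 * \<rho> i x) \<and>
      integrable lborel (\<rho> i) \<and>
      (\<integral>x. \<rho> i x \<partial>lborel) = \<beta> i}"

definition F0 :: "nat \<Rightarrow> (nat \<Rightarrow> nat \<Rightarrow> real) \<Rightarrow> (nat \<Rightarrow> R2 \<Rightarrow> real) \<Rightarrow> real" where
  "F0 n a \<rho> =
     (\<Sum>i\<in>{1..n}. \<integral>x. \<rho> i x * ln (\<rho> i x) \<partial>lborel)
   + 1 / (4 * pi) * (\<Sum>i\<in>{1..n}. \<Sum>j\<in>{1..n}. a i j *
        (\<integral>z. \<rho> i (fst z) * ln (norm (fst z - snd z)) * \<rho> j (snd z)
            \<partial>(lborel \<Otimes>\<^sub>M lborel)))
   + (\<Sum>i\<in>{1..n}. 1/2 * (\<integral>x. (norm x)\<^sup>2 * \<rho> i x \<partial>lborel))"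

end

theory Submission
  imports Defs
begin

(* Dilating all densities by the same factor, rho_i(x) to c^2 rho_i(c x), keeps them in Gamma^beta,
   adds 2 ln c beta_i to each entropy, subtracts ln c beta_i beta_j from each logarithmic interaction
   and divides each second moment by c^2. Hence F_0 changes by (ln c / 4 pi) Lambda_I(beta) plus
   (1/c^2 - 1)/2 times the total second moment. When Lambda_I(beta) = 0 the first term vanishes, so
   any c > 1 strictly decreases F_0 and no minimiser can exist. The analytic work is the integrability of the
   logarithmic interaction: a non-integrable integrand has Bochner integral 0, for which the
   scaling identity of the interaction term would fail. *)

lemma nn_integral_lborel_affine:
  fixes f :: "'a::euclidean_space \<Rightarrow> ennreal" and c :: real
  assumes [measurable]: "f \<in> borel_measurable borel" and c: "c \<noteq> 0"
  shows "(\<integral>\<^sup>+x. f x \<partial>lborel) = ennreal (\<bar>c\<bar> ^ DIM('a)) * (\<integral>\<^sup>+x. f (t + c *\<^sub>R x) \<partial>lborel)"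
  by (subst lborel_affine[OF c, of t]) (simp add: nn_integral_density nn_integral_distr nn_integral_cmult)

lemma lborel_integrable_affine:
  fixes f :: "'a::euclidean_space \<Rightarrow> real"
  assumes f: "integrable lborel f" and c: "c \<noteq> 0"
  shows "integrable lborel (\<lambda>x. f (t + c *\<^sub>R x))"
  using f f[THEN borel_measurable_integrable] unfolding integrable_iff_bounded
  by (subst (asm) nn_integral_lborel_affine[where c=c and t=t]) (auto simp: ennreal_mult_less_top c)

lemma lborel_integral_affine:
  fixes f :: "'a::euclidean_space \<Rightarrow> real"
  assumes c: "c \<noteq> 0" and f: "integrable lborel f"
  shows "(\<integral>x. f x \<partial>lborel) = \<bar>c\<bar> ^ DIM('a) * (\<integral>x. f (t + c *\<^sub>R x) \<partial>lborel)"
  using c f f[THEN borel_measurable_integrable] lborel_integrable_affine[OF f c, of t]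
  by (subst lborel_affine[OF c, of t]) (simp add: integral_density integral_distr)

lemma lborel_integral_scale:
  fixes f :: "'a::euclidean_space \<Rightarrow> real"
  assumes c: "0 < c" and f: "integrable lborel f"
  shows "(\<integral>x. f (c *\<^sub>R x) \<partial>lborel) = (\<integral>x. f x \<partial>lborel) / c ^ DIM('a)"
  using lborel_integral_affine[OF _ f, of c 0] c by simp

definition dilate :: "real \<Rightarrow> ('a::euclidean_space \<Rightarrow> real) \<Rightarrow> 'a \<Rightarrow> real" where
  "dilate c p x = c ^ DIM('a) * p (c *\<^sub>R x)"

definition admissible_density :: "('a::euclidean_space \<Rightarrow> real) \<Rightarrow> bool" where
  "admissible_density p \<longleftrightarrow> p \<in> borel_measurable lborel \<and> (\<forall>x. 0 \<le> p x) \<and> integrable lborel p \<and>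
     integrable lborel (\<lambda>x. p x * ln (p x)) \<and> integrable lborel (\<lambda>x. (norm x)\<^sup>2 * p x)"

lemma Gamma_iff_admissible_density:
  "\<rho> \<in> Gamma n \<beta> \<longleftrightarrow> (\<forall>i\<in>{1..n}. admissible_density (\<rho> i) \<and> (\<integral>x. \<rho> i x \<partial>lborel) = \<beta> i)"
  unfolding Gamma_def admissible_density_def by auto

lemma
  fixes f :: "'a::euclidean_space \<Rightarrow> real"
  assumes c: "0 < c" and f: "integrable lborel f"
  shows integrable_dilate: "integrable lborel (dilate c f)"
    and integral_dilate: "(\<integral>x. dilate c f x \<partial>lborel) = (\<integral>x. f x \<partial>lborel)"
  using lborel_integrable_affine[OF f, of c 0] lborel_integral_scale[OF c f] c
  by (simp_all add: dilate_def[abs_def])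

lemma
  fixes p :: "'a::euclidean_space \<Rightarrow> real"
  assumes c: "0 < c" and p: "admissible_density p"
  shows integrable_entropy_dilate: "integrable lborel (\<lambda>x. dilate c p x * ln (dilate c p x))"
    and integral_entropy_dilate: "(\<integral>x. dilate c p x * ln (dilate c p x) \<partial>lborel)
      = DIM('a) * ln c * (\<integral>x. p x \<partial>lborel) + (\<integral>x. p x * ln (p x) \<partial>lborel)"
proof -
  have ip: "integrable lborel p" and ie: "integrable lborel (\<lambda>x. p x * ln (p x))" and p0: "\<And>x. 0 \<le> p x"
    using p by (auto simp: admissible_density_def)
  define g where "g = (\<lambda>x. DIM('a) * ln c * p x + p x * ln (p x))"
  have ig: "integrable lborel g" unfolding g_def using ip ie by auto
  have "dilate c p x * ln (dilate c p x) = dilate c g x" for x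
  proof (cases "p (c *\<^sub>R x) = 0")
    case False
    then have "0 < p (c *\<^sub>R x)" using p0 by (simp add: order_less_le)
    then show ?thesis using c by (simp add: dilate_def g_def ln_mult ln_realpow algebra_simps)
  qed (simp add: dilate_def g_def)
  then have eq: "(\<lambda>x. dilate c p x * ln (dilate c p x)) = dilate c g" by blast
  show "integrable lborel (\<lambda>x. dilate c p x * ln (dilate c p x))"
    unfolding eq by (rule integrable_dilate[OF c ig])
  show "(\<integral>x. dilate c p x * ln (dilate c p x) \<partial>lborel)
      = DIM('a) * ln c * (\<integral>x. p x \<partial>lborel) + (\<integral>x. p x * ln (p x) \<partial>lborel)"
    unfolding eq integral_dilate[OF c ig] using ip ie by (simp add: g_def)
qed

lemma
  fixes p :: "'a::euclidean_space \<Rightarrow> real"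
  assumes c: "0 < c" and p: "integrable lborel (\<lambda>x. (norm x)\<^sup>2 * p x)"
  shows integrable_second_moment_dilate: "integrable lborel (\<lambda>x. (norm x)\<^sup>2 * dilate c p x)"
    and integral_second_moment_dilate:
      "(\<integral>x. (norm x)\<^sup>2 * dilate c p x \<partial>lborel) = (\<integral>x. (norm x)\<^sup>2 * p x \<partial>lborel) / c\<^sup>2"
proof -
  have eq: "(\<lambda>x. (norm x)\<^sup>2 * dilate c p x) = (\<lambda>x. dilate c (\<lambda>y. (norm y)\<^sup>2 * p y) x / c\<^sup>2)"
    using c by (simp add: dilate_def fun_eq_iff power_mult_distrib)
  show "integrable lborel (\<lambda>x. (norm x)\<^sup>2 * dilate c p x)"
    unfolding eq using integrable_dilate[OF c p] by simp
  show "(\<integral>x. (norm x)\<^sup>2 * dilate c p x \<partial>lborel) = (\<integral>x. (norm x)\<^sup>2 * p x \<partial>lborel) / c\<^sup>2"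
    unfolding eq using integral_dilate[OF c p] by simp
qed

lemma admissible_density_dilate:
  assumes c: "0 < c" and p: "admissible_density p"
  shows "admissible_density (dilate c p)"
proof -
  have [measurable]: "p \<in> borel_measurable borel" using p by (simp add: admissible_density_def)
  show ?thesis
    using p c integrable_dilate[OF c] integrable_entropy_dilate[OF c p] integrable_second_moment_dilate[OF c]
    by (auto simp: admissible_density_def dilate_def)
qed

lemma integrable_abs_powr_on_Icc:
  fixes e :: real
  assumes e: "-1 < e"
  shows "integrable lborel (\<lambda>s::real. indicator {-1..1} s * \<bar>s\<bar> powr e)"
proof -
  let ?g = "\<lambda>s::real. indicator {0..1} s * s powr e"
  have "((\<lambda>s. s powr e) has_integral (1 powr (e + 1) / (e + 1))) {0..1}"
    using e by (intro has_integral_powr_from_0) auto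
  moreover have "?g = (\<lambda>s. if s \<in> {0..1} then s powr e else 0)"
    by (auto simp: indicator_def)
  ultimately have "(?g has_integral 1 / (e + 1)) UNIV"
    using has_integral_restrict_UNIV[of "{0..1}" "\<lambda>s. s powr e"] by simp
  then have "integral\<^sup>N lborel ?g = 1 / (e + 1)"
    by (rule nn_integral_has_integral_lborel[rotated 2]) auto
  then have g: "integrable lborel ?g"
    by (intro integrableI_nn_integral_finite[where x="1 / (e + 1)"]) auto
  have "integrable lborel (\<lambda>s. ?g s + ?g (0 + (-1) *\<^sub>R s))"
    using g lborel_integrable_affine[OF g, of "-1" 0] by auto
  then show ?thesis
    by (rule Bochner_Integration.integrable_bound) (auto simp: indicator_def)
qed

(* The value \<infinity> at 0 makes the product bound below hold on the coordinate hyperplanes too. *)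
definition abs_powr_majorant :: "real \<Rightarrow> real \<Rightarrow> ennreal" where
  "abs_powr_majorant e s = (if s = 0 then \<infinity> else ennreal (indicator {-1..1} s * \<bar>s\<bar> powr e))"

lemma abs_powr_majorant_measurable[measurable]: "abs_powr_majorant e \<in> borel_measurable borel"
  unfolding abs_powr_majorant_def by measurable

lemma nn_integral_abs_powr_majorant_finite:
  assumes e: "-1 < e"
  shows "(\<integral>\<^sup>+s. abs_powr_majorant e s \<partial>lborel) < \<infinity>"
proof -
  have "(\<integral>\<^sup>+s. abs_powr_majorant e s \<partial>lborel)
      = (\<integral>\<^sup>+s. ennreal (norm (indicator {-1..1} s * \<bar>s::real\<bar> powr e)) \<partial>lborel)"
    by (intro nn_integral_cong_AE)
       (use AE_lborel_singleton[of 0] in \<open>auto simp: abs_powr_majorant_def indicator_def\<close>)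
  also have "\<dots> < \<infinity>"
    using integrable_abs_powr_on_Icc[OF e] unfolding integrable_iff_bounded by blast
  finally show ?thesis .
qed

definition singular_kernel :: "'a::real_normed_vector \<Rightarrow> real" where
  "singular_kernel z = (if 0 < norm z \<and> norm z < 1 then norm z powr (-1/2) else 0)"

lemma singular_kernel_nonneg: "0 \<le> singular_kernel z"
  by (simp add: singular_kernel_def)

lemma singular_kernel_measurable[measurable]: "singular_kernel \<in> borel_measurable borel"
  unfolding singular_kernel_def by measurable

lemma singular_kernel_le_prod_abs_powr_majorant:
  fixes z :: "'a::euclidean_space"
  shows "ennreal (singular_kernel z) \<le> (\<Prod>b\<in>Basis. abs_powr_majorant (-1 / (2 * DIM('a))) (z \<bullet> b))"
proof (cases "0 < norm z \<and> norm z < 1")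
  case True
  let ?e = "-1 / (2 * DIM('a)) :: real"
  have "ennreal (norm z powr ?e) \<le> abs_powr_majorant ?e (z \<bullet> b)" if b: "b \<in> Basis" for b
  proof (cases "z \<bullet> b = 0")
    case False
    have le: "\<bar>z \<bullet> b\<bar> \<le> norm z" using Basis_le_norm[OF b] .
    then have "norm z powr ?e \<le> \<bar>z \<bullet> b\<bar> powr ?e"
      using False by (intro powr_mono2') auto
    then show ?thesis using False le True by (auto simp: abs_powr_majorant_def indicator_def)
  qed (simp add: abs_powr_majorant_def)
  then have "(\<Prod>b\<in>(Basis::'a set). ennreal (norm z powr ?e)) \<le> (\<Prod>b\<in>Basis. abs_powr_majorant ?e (z \<bullet> b))"
    by (rule prod_mono_ennreal)
  moreover have "(\<Prod>b\<in>(Basis::'a set). ennreal (norm z powr ?e)) = ennreal (norm z powr (-1/2))"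
    using True by (simp add: ennreal_power powr_power)
  ultimately show ?thesis using True by (simp add: singular_kernel_def)
qed (auto simp: singular_kernel_def)

lemma integrable_singular_kernel: "integrable lborel (singular_kernel :: 'a::euclidean_space \<Rightarrow> real)"
  unfolding integrable_iff_bounded
proof
  let ?e = "-1 / (2 * DIM('a)) :: real"
  have "(\<integral>\<^sup>+z. ennreal (norm (singular_kernel (z::'a))) \<partial>lborel)
      \<le> (\<integral>\<^sup>+z. (\<Prod>b\<in>(Basis::'a set). abs_powr_majorant ?e (z \<bullet> b)) \<partial>lborel)"
    unfolding real_norm_def abs_of_nonneg[OF singular_kernel_nonneg]
    by (intro nn_integral_mono singular_kernel_le_prod_abs_powr_majorant)
  also have "\<dots> = (\<Prod>b\<in>(Basis::'a set). (\<integral>\<^sup>+s. abs_powr_majorant ?e s \<partial>lborel))"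
    by (rule nn_integral_lborel_prod) auto
  also have "\<dots> < \<infinity>"
    using nn_integral_abs_powr_majorant_finite[of ?e] DIM_positive[where 'a='a]
    by (simp add: power_less_top_ennreal field_simps)
  finally show "(\<integral>\<^sup>+z. ennreal (norm (singular_kernel (z::'a))) \<partial>lborel) < \<infinity>" .
qed simp

lemma
  fixes x :: "'a::euclidean_space"
  shows integrable_singular_kernel_shift: "integrable lborel (\<lambda>y. singular_kernel (x - y))"
    and integral_singular_kernel_shift:
      "(\<integral>y. singular_kernel (x - y) \<partial>lborel) = (\<integral>y. singular_kernel (y::'a) \<partial>lborel)"
  using lborel_integrable_affine[OF integrable_singular_kernel, of "-1" x]
    lborel_integral_affine[OF _ integrable_singular_kernel, of "-1" x, symmetric]
  by simp_all

lemma mult_le_entropy_add_exp: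
  fixes q b :: real
  assumes q: "0 \<le> q"
  shows "q * b \<le> q * ln q - q + exp b"
proof (cases "q = 0")
  case False
  with q have qp: "0 < q" by simp
  have "q * (1 + (b - ln q)) \<le> q * exp (b - ln q)"
    using qp exp_ge_add_one_self[of "b - ln q"] by (intro mult_left_mono) auto
  also have "q * exp (b - ln q) = exp b" using qp by (simp add: exp_diff)
  finally show ?thesis by (simp add: algebra_simps)
qed simp

(* Young's inequality with b = -(ln t)/2 trades the singularity of ln t at 0 for the entropy
   density and the integrable kernel t powr (-1/2). *)
lemma abs_ln_norm_diff_le:
  fixes x y :: "'a::real_normed_vector" and q :: real
  assumes q: "0 \<le> q"
  shows "q * \<bar>ln (norm (x - y))\<bar>
    \<le> q * (1 + (norm x)\<^sup>2 + (norm y)\<^sup>2) + 2 * \<bar>q * ln q\<bar> + 2 * singular_kernel (x - y)"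
proof -
  let ?t = "norm (x - y)"
  have k0: "0 \<le> singular_kernel (x - y)" by (rule singular_kernel_nonneg)
  have r0: "0 \<le> q * (1 + (norm x)\<^sup>2 + (norm y)\<^sup>2)" using q by simp
  consider "?t = 0" | "1 \<le> ?t" | "0 < ?t" "?t < 1" by force
  then show ?thesis
  proof cases
    case 1
    then show ?thesis using r0 k0 by simp
  next
    case 2
    have "ln ?t \<le> norm x + norm y - 1"
      using ln_le_minus_one[of ?t] norm_triangle_ineq4[of x y] 2 by linarith
    also have "\<dots> \<le> 1 + (norm x)\<^sup>2 + (norm y)\<^sup>2"
      using zero_le_power2[of "norm x - 1"] zero_le_power2[of "norm y - 1"]
      by (simp add: power2_eq_square algebra_simps) (use norm_ge_zero[of x] norm_ge_zero[of y] in linarith)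
    finally have "q * \<bar>ln ?t\<bar> \<le> q * (1 + (norm x)\<^sup>2 + (norm y)\<^sup>2)"
      using 2 q by (intro mult_left_mono) auto
    then show ?thesis using k0 by linarith
  next
    case 3
    have "q * (- ln ?t / 2) \<le> q * ln q - q + exp (- ln ?t / 2)"
      by (rule mult_le_entropy_add_exp[OF q])
    also have "exp (- ln ?t / 2) = singular_kernel (x - y)"
      using 3 by (simp add: singular_kernel_def powr_def)
    finally have "q * \<bar>ln ?t\<bar> \<le> 2 * (q * ln q) - 2 * q + 2 * singular_kernel (x - y)"
      using 3 by (simp add: algebra_simps)
    then show ?thesis using q r0 abs_ge_self[of "q * ln q"] by linarith
  qed
qed

definition log_interaction_majorant :: "('a::real_normed_vector \<Rightarrow> real) \<Rightarrow> 'a \<Rightarrow> 'a \<Rightarrow> real" where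
  "log_interaction_majorant q x y =
     q y * (1 + (norm x)\<^sup>2 + (norm y)\<^sup>2) + 2 * \<bar>q y * ln (q y)\<bar> + 2 * singular_kernel (x - y)"

lemma
  fixes q :: "'a::euclidean_space \<Rightarrow> real"
  assumes q: "admissible_density q"
  shows integrable_log_interaction_majorant: "integrable lborel (log_interaction_majorant q x)"
    and integral_log_interaction_majorant: "(\<integral>y. log_interaction_majorant q x y \<partial>lborel)
      = (1 + (norm x)\<^sup>2) * (\<integral>y. q y \<partial>lborel) + ((\<integral>y. (norm y)\<^sup>2 * q y \<partial>lborel)
        + 2 * (\<integral>y. \<bar>q y * ln (q y)\<bar> \<partial>lborel) + 2 * (\<integral>y. singular_kernel (y::'a) \<partial>lborel))"
proof -
  have i1: "integrable lborel q" and i2: "integrable lborel (\<lambda>y. \<bar>q y * ln (q y)\<bar>)"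
    and i3: "integrable lborel (\<lambda>y. (norm y)\<^sup>2 * q y)"
    using q by (auto simp: admissible_density_def)
  have eq: "log_interaction_majorant q x = (\<lambda>y. (1 + (norm x)\<^sup>2) * q y + (norm y)\<^sup>2 * q y
      + 2 * \<bar>q y * ln (q y)\<bar> + 2 * singular_kernel (x - y))"
    by (auto simp: log_interaction_majorant_def algebra_simps fun_eq_iff)
  show "integrable lborel (log_interaction_majorant q x)"
    unfolding eq using i1 i2 i3 integrable_singular_kernel_shift[of x] by auto
  show "(\<integral>y. log_interaction_majorant q x y \<partial>lborel)
      = (1 + (norm x)\<^sup>2) * (\<integral>y. q y \<partial>lborel) + ((\<integral>y. (norm y)\<^sup>2 * q y \<partial>lborel)
        + 2 * (\<integral>y. \<bar>q y * ln (q y)\<bar> \<partial>lborel) + 2 * (\<integral>y. singular_kernel (y::'a) \<partial>lborel))"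
    unfolding eq using i1 i2 i3 integrable_singular_kernel_shift[of x]
    by (simp add: integral_singular_kernel_shift algebra_simps)
qed

lemma
  fixes p q :: "'a::euclidean_space \<Rightarrow> real"
  assumes p: "admissible_density p" and q: "admissible_density q"
  shows integrable_log_interaction_section: "integrable lborel (\<lambda>y. p x * ln (norm (x - y)) * q y)"
    and integral_abs_log_interaction_section_le: "(\<integral>y. norm (p x * ln (norm (x - y)) * q y) \<partial>lborel)
      \<le> p x * (\<integral>y. log_interaction_majorant q x y \<partial>lborel)"
proof -
  have [measurable]: "p \<in> borel_measurable borel" "q \<in> borel_measurable borel"
    and p0: "0 \<le> p x" and q0: "\<And>y. 0 \<le> q y"
    using p q by (auto simp: admissible_density_def)
  have le: "norm (p x * ln (norm (x - y)) * q y) \<le> p x * log_interaction_majorant q x y" for y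
  proof -
    have "norm (p x * ln (norm (x - y)) * q y) = p x * (q y * \<bar>ln (norm (x - y))\<bar>)"
      using p0 q0[of y] by (simp add: abs_mult)
    also have "\<dots> \<le> p x * log_interaction_majorant q x y"
      unfolding log_interaction_majorant_def by (intro mult_left_mono abs_ln_norm_diff_le q0 p0)
    finally show ?thesis .
  qed
  have majorant: "integrable lborel (\<lambda>y. p x * log_interaction_majorant q x y)"
    using integrable_log_interaction_majorant[OF q] by simp
  show integrable: "integrable lborel (\<lambda>y. p x * ln (norm (x - y)) * q y)"
  proof (rule Bochner_Integration.integrable_bound[OF majorant])
    show "AE y in lborel. norm (p x * ln (norm (x - y)) * q y) \<le> norm (p x * log_interaction_majorant q x y)"
      using le by (intro AE_I2) (metis abs_ge_self order_trans real_norm_def)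
  qed measurable
  have "(\<integral>y. norm (p x * ln (norm (x - y)) * q y) \<partial>lborel) \<le> (\<integral>y. p x * log_interaction_majorant q x y \<partial>lborel)"
    using integrable majorant le by (intro integral_mono) auto
  then show "(\<integral>y. norm (p x * ln (norm (x - y)) * q y) \<partial>lborel)
      \<le> p x * (\<integral>y. log_interaction_majorant q x y \<partial>lborel)"
    by simp
qed

lemma integrable_log_interaction:
  fixes p q :: "'a::euclidean_space \<Rightarrow> real"
  assumes p: "admissible_density p" and q: "admissible_density q"
  shows "integrable (lborel \<Otimes>\<^sub>M lborel) (\<lambda>z. p (fst z) * ln (norm (fst z - snd z)) * q (snd z))"
proof -
  have [measurable]: "p \<in> borel_measurable borel" "q \<in> borel_measurable borel"
    and ip: "integrable lborel p" and ip2: "integrable lborel (\<lambda>x. (norm x)\<^sup>2 * p x)"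
    using p q by (auto simp: admissible_density_def)
  define A where "A = (\<integral>y. q y \<partial>lborel)"
  define B where "B = (\<integral>y. (norm y)\<^sup>2 * q y \<partial>lborel) + 2 * (\<integral>y. \<bar>q y * ln (q y)\<bar> \<partial>lborel)
    + 2 * (\<integral>y. singular_kernel (y::'a) \<partial>lborel)"
  have bound: "(\<integral>y. norm (p x * ln (norm (x - y)) * q y) \<partial>lborel) \<le> (A + B) * p x + A * ((norm x)\<^sup>2 * p x)"
    for x
    using integral_abs_log_interaction_section_le[OF p q, of x]
    by (simp add: integral_log_interaction_majorant[OF q] A_def B_def algebra_simps)
  have "integrable lborel (\<lambda>x. \<integral>y. norm (p x * ln (norm (x - y)) * q y) \<partial>lborel)"
  proof (rule Bochner_Integration.integrable_bound)
    show "integrable lborel (\<lambda>x. (A + B) * p x + A * ((norm x)\<^sup>2 * p x))"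
      using ip ip2 by simp
    show "AE x in lborel. norm (\<integral>y. norm (p x * ln (norm (x - y)) * q y) \<partial>lborel)
        \<le> norm ((A + B) * p x + A * ((norm x)\<^sup>2 * p x))"
      using bound by (intro AE_I2) (simp add: abs_of_nonneg integral_nonneg_AE order_trans[OF _ abs_ge_self])
  qed measurable
  then show ?thesis
    by (intro lborel_pair.Fubini_integrable) (auto simp: integrable_log_interaction_section[OF p q])
qed

lemma (in pair_sigma_finite)
  fixes f :: "'a \<Rightarrow> real" and g :: "'b \<Rightarrow> real"
  assumes f: "integrable M1 f" and g: "integrable M2 g"
  shows integrable_mult_fst_snd: "integrable (M1 \<Otimes>\<^sub>M M2) (\<lambda>z. f (fst z) * g (snd z))"
    and integral_mult_fst_snd:
      "(\<integral>z. f (fst z) * g (snd z) \<partial>(M1 \<Otimes>\<^sub>M M2)) = (\<integral>x. f x \<partial>M1) * (\<integral>y. g y \<partial>M2)"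
proof -
  have [measurable]: "f \<in> borel_measurable M1" "g \<in> borel_measurable M2"
    using f g by auto
  have "integrable M1 (\<lambda>x. \<integral>y. norm (f (fst (x, y)) * g (snd (x, y))) \<partial>M2)"
    using f by (simp add: abs_mult integrable_abs)
  then show I: "integrable (M1 \<Otimes>\<^sub>M M2) (\<lambda>z. f (fst z) * g (snd z))"
    by (rule Fubini_integrable[rotated]) (use g in auto)
  show "(\<integral>z. f (fst z) * g (snd z) \<partial>(M1 \<Otimes>\<^sub>M M2)) = (\<integral>x. f x \<partial>M1) * (\<integral>y. g y \<partial>M2)"
    using integral_fst'[OF I] by simp
qed

lemma AE_lborel_pair_fst_neq_snd: "AE z in (lborel \<Otimes>\<^sub>M lborel :: ('a::euclidean_space \<times> 'a) measure). fst z \<noteq> snd z"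
proof (rule lborel_pair.AE_pair_measure)
  show "{z \<in> space (lborel \<Otimes>\<^sub>M lborel). fst z \<noteq> snd z} \<in> sets (lborel \<Otimes>\<^sub>M lborel :: ('a \<times> 'a) measure)"
    by measurable
  show "AE x in lborel. AE y in lborel. fst (x, y) \<noteq> snd (x::'a, y::'a)"
    using AE_lborel_singleton by (auto simp: eq_commute)
qed

lemma integral_log_interaction_dilate:
  fixes p q :: "'a::euclidean_space \<Rightarrow> real"
  assumes c: "0 < c" and p: "admissible_density p" and q: "admissible_density q"
  shows "(\<integral>z. dilate c p (fst z) * ln (norm (fst z - snd z)) * dilate c q (snd z) \<partial>(lborel \<Otimes>\<^sub>M lborel))
    = (\<integral>z. p (fst z) * ln (norm (fst z - snd z)) * q (snd z) \<partial>(lborel \<Otimes>\<^sub>M lborel))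
      - ln c * ((\<integral>x. p x \<partial>lborel) * (\<integral>x. q x \<partial>lborel))"
proof -
  have ip: "integrable lborel p" and iq: "integrable lborel q"
    using p q by (auto simp: admissible_density_def)
  define G where "G w = p (fst w) * ln (norm (fst w - snd w)) * q (snd w) - ln c * (p (fst w) * q (snd w))"
    for w :: "'a \<times> 'a"
  have G_integrable: "integrable (lborel \<Otimes>\<^sub>M lborel) G"
    unfolding G_def[abs_def]
    using integrable_log_interaction[OF p q] lborel_pair.integrable_mult_fst_snd[OF ip iq] by auto
  have "dilate c p (fst z) * ln (norm (fst z - snd z)) * dilate c q (snd z) = c ^ (2 * DIM('a)) * G (c *\<^sub>R z)"
    if "fst z \<noteq> snd z" for z :: "'a \<times> 'a"
  proof -
    have "norm (c *\<^sub>R fst z - c *\<^sub>R snd z) = c * norm (fst z - snd z)"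
      using c by (simp add: scaleR_diff_right[symmetric])
    then have "ln (norm (c *\<^sub>R fst z - c *\<^sub>R snd z)) = ln c + ln (norm (fst z - snd z))"
      using c that by (simp add: ln_mult)
    then show ?thesis
      by (simp add: G_def dilate_def power_mult power2_eq_square algebra_simps)
  qed
  then have "(\<integral>z. dilate c p (fst z) * ln (norm (fst z - snd z)) * dilate c q (snd z) \<partial>(lborel \<Otimes>\<^sub>M lborel))
      = (\<integral>z. c ^ (2 * DIM('a)) * G (c *\<^sub>R z) \<partial>(lborel \<Otimes>\<^sub>M lborel))"
    by (intro integral_cong_AE) (use AE_lborel_pair_fst_neq_snd p q in \<open>auto simp: admissible_density_def dilate_def G_def\<close>)
  also have "\<dots> = (\<integral>w. G w \<partial>(lborel \<Otimes>\<^sub>M lborel))"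
    using lborel_integral_scale[OF c, of G] G_integrable c by (simp add: lborel_prod mult_2)
  also have "\<dots> = (\<integral>z. p (fst z) * ln (norm (fst z - snd z)) * q (snd z) \<partial>(lborel \<Otimes>\<^sub>M lborel))
      - ln c * ((\<integral>x. p x \<partial>lborel) * (\<integral>x. q x \<partial>lborel))"
    unfolding G_def[abs_def]
    using integrable_log_interaction[OF p q] lborel_pair.integrable_mult_fst_snd[OF ip iq]
    by (simp add: lborel_pair.integral_mult_fst_snd[OF ip iq])
  finally show ?thesis .
qed

lemma second_moment_pos:
  fixes p :: "'a::euclidean_space \<Rightarrow> real"
  assumes p: "admissible_density p" and mass: "0 < (\<integral>x. p x \<partial>lborel)"
  shows "0 < (\<integral>x. (norm x)\<^sup>2 * p x \<partial>lborel)"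
proof (rule ccontr)
  have p0: "\<And>x. 0 \<le> p x" and [measurable]: "p \<in> borel_measurable borel"
    and im: "integrable lborel (\<lambda>x. (norm x)\<^sup>2 * p x)"
    using p by (auto simp: admissible_density_def)
  assume "\<not> 0 < (\<integral>x. (norm x)\<^sup>2 * p x \<partial>lborel)"
  moreover have "0 \<le> (\<integral>x. (norm x)\<^sup>2 * p x \<partial>lborel)"
    using p0 by simp
  ultimately have "AE x in lborel. (norm x)\<^sup>2 * p x = 0"
    using integral_nonneg_eq_0_iff_AE[OF im] p0 by simp
  then have "AE x in lborel. p x = 0"
    using AE_lborel_singleton[of 0] by eventually_elim auto
  then have "(\<integral>x. p x \<partial>lborel) = 0"
    by (rule integral_eq_zero_AE)
  with mass show False by simp
qed

lemma dilate_in_Gamma: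
  assumes \<rho>: "\<rho> \<in> Gamma n \<beta>" and c: "0 < c"
  shows "(\<lambda>i. dilate c (\<rho> i)) \<in> Gamma n \<beta>"
  unfolding Gamma_iff_admissible_density
proof (intro ballI conjI)
  fix i assume "i \<in> {1..n}"
  then have adm: "admissible_density (\<rho> i)" and mass: "(\<integral>x. \<rho> i x \<partial>lborel) = \<beta> i"
    using \<rho> by (auto simp: Gamma_iff_admissible_density)
  show "admissible_density (dilate c (\<rho> i))"
    by (rule admissible_density_dilate[OF c adm])
  show "(\<integral>x. dilate c (\<rho> i) x \<partial>lborel) = \<beta> i"
    using integral_dilate[OF c, of "\<rho> i"] adm mass by (simp add: admissible_density_def)
qed

lemma Lambda_eq: "Lambda a J \<beta> = 8 * pi * (\<Sum>i\<in>J. \<beta> i) - (\<Sum>i\<in>J. \<Sum>j\<in>J. a i j * (\<beta> i * \<beta> j))"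
proof -
  have "Lambda a J \<beta> = (\<Sum>i\<in>J. 8 * pi * \<beta> i - (\<Sum>j\<in>J. a i j * (\<beta> i * \<beta> j)))"
    unfolding Lambda_def by (intro sum.cong refl) (simp add: right_diff_distrib sum_distrib_left algebra_simps)
  then show ?thesis by (simp add: sum_subtractf sum_distrib_left)
qed

lemma F0_dilate:
  assumes \<rho>: "\<rho> \<in> Gamma n \<beta>" and c: "0 < c"
  shows "F0 n a (\<lambda>i. dilate c (\<rho> i)) = F0 n a \<rho> + ln c / (4 * pi) * Lambda a {1..n} \<beta>
    + (1 / c\<^sup>2 - 1) / 2 * (\<Sum>i\<in>{1..n}. \<integral>x. (norm x)\<^sup>2 * \<rho> i x \<partial>lborel)"
proof -
  have adm: "\<And>i. i \<in> {1..n} \<Longrightarrow> admissible_density (\<rho> i)"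
    and mass: "\<And>i. i \<in> {1..n} \<Longrightarrow> (\<integral>x. \<rho> i x \<partial>lborel) = \<beta> i"
    using \<rho> by (auto simp: Gamma_iff_admissible_density)
  have entropy: "(\<Sum>i\<in>{1..n}. \<integral>x. dilate c (\<rho> i) x * ln (dilate c (\<rho> i) x) \<partial>lborel)
      = (\<Sum>i\<in>{1..n}. \<integral>x. \<rho> i x * ln (\<rho> i x) \<partial>lborel) + 2 * ln c * (\<Sum>i\<in>{1..n}. \<beta> i)"
    by (simp add: integral_entropy_dilate[OF c adm] mass sum.distrib sum_distrib_left)
  have interaction: "(\<Sum>i\<in>{1..n}. \<Sum>j\<in>{1..n}. a i j * (\<integral>z. dilate c (\<rho> i) (fst z)
        * ln (norm (fst z - snd z)) * dilate c (\<rho> j) (snd z) \<partial>(lborel \<Otimes>\<^sub>M lborel)))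
      = (\<Sum>i\<in>{1..n}. \<Sum>j\<in>{1..n}. a i j * (\<integral>z. \<rho> i (fst z) * ln (norm (fst z - snd z)) * \<rho> j (snd z)
        \<partial>(lborel \<Otimes>\<^sub>M lborel))) - ln c * (\<Sum>i\<in>{1..n}. \<Sum>j\<in>{1..n}. a i j * (\<beta> i * \<beta> j))"
  proof -
    have "(\<Sum>i\<in>{1..n}. \<Sum>j\<in>{1..n}. a i j * (\<integral>z. dilate c (\<rho> i) (fst z)
          * ln (norm (fst z - snd z)) * dilate c (\<rho> j) (snd z) \<partial>(lborel \<Otimes>\<^sub>M lborel)))
        = (\<Sum>i\<in>{1..n}. \<Sum>j\<in>{1..n}. a i j * (\<integral>z. \<rho> i (fst z) * ln (norm (fst z - snd z)) * \<rho> j (snd z)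
          \<partial>(lborel \<Otimes>\<^sub>M lborel)) - ln c * (a i j * (\<beta> i * \<beta> j)))"
      by (intro sum.cong refl) (subst integral_log_interaction_dilate[OF c adm adm]; simp add: mass algebra_simps)
    then show ?thesis by (simp add: sum_subtractf sum_distrib_left)
  qed
  have moment: "(\<Sum>i\<in>{1..n}. 1/2 * (\<integral>x. (norm x)\<^sup>2 * dilate c (\<rho> i) x \<partial>lborel))
      = (\<Sum>i\<in>{1..n}. 1/2 * (\<integral>x. (norm x)\<^sup>2 * \<rho> i x \<partial>lborel))
        + (1 / c\<^sup>2 - 1) / 2 * (\<Sum>i\<in>{1..n}. \<integral>x. (norm x)\<^sup>2 * \<rho> i x \<partial>lborel)"
  proof -
    have "(\<integral>x. (norm x)\<^sup>2 * dilate c (\<rho> i) x \<partial>lborel) = (\<integral>x. (norm x)\<^sup>2 * \<rho> i x \<partial>lborel) / c\<^sup>2"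
      if "i \<in> {1..n}" for i
      using adm[OF that] by (intro integral_second_moment_dilate[OF c]) (simp add: admissible_density_def)
    then have "(\<Sum>i\<in>{1..n}. 1/2 * (\<integral>x. (norm x)\<^sup>2 * dilate c (\<rho> i) x \<partial>lborel))
        = (\<Sum>i\<in>{1..n}. 1/2 * (\<integral>x. (norm x)\<^sup>2 * \<rho> i x \<partial>lborel)
          + (1 / c\<^sup>2 - 1) / 2 * (\<integral>x. (norm x)\<^sup>2 * \<rho> i x \<partial>lborel))"
      by (intro sum.cong refl) (simp add: field_simps)
    then show ?thesis by (simp add: sum.distrib sum_distrib_left)
  qed
  show ?thesis
    unfolding F0_def entropy interaction moment Lambda_eq by (simp add: field_simps)
qed

theorem lemma6:
  fixes n :: nat and a :: "nat \<Rightarrow> nat \<Rightarrow> real" and \<beta> :: "nat \<Rightarrow> real"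
  assumes "n \<ge> 1"
    and "\<forall>i\<in>{1..n}. \<forall>j\<in>{1..n}. a i j = a j i"
    and "\<forall>i\<in>{1..n}. \<forall>j\<in>{1..n}. a i j \<ge> 0"
    and "\<forall>i\<in>{1..n}. \<beta> i > 0"
    and "Lambda a {1..n} \<beta> = 0"
    and "\<forall>J. J \<noteq> {} \<and> J \<subset> {1..n} \<longrightarrow> Lambda a J \<beta> > 0"
  shows "\<not> (\<exists>\<rho>\<in>Gamma n \<beta>. \<forall>\<sigma>\<in>Gamma n \<beta>. F0 n a \<rho> \<le> F0 n a \<sigma>)"
proof
  assume "\<exists>\<rho>\<in>Gamma n \<beta>. \<forall>\<sigma>\<in>Gamma n \<beta>. F0 n a \<rho> \<le> F0 n a \<sigma>"
  then obtain \<rho> where \<rho>: "\<rho> \<in> Gamma n \<beta>" and min: "\<forall>\<sigma>\<in>Gamma n \<beta>. F0 n a \<rho> \<le> F0 n a \<sigma>"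
    by blast
  have "0 < (\<Sum>i\<in>{1..n}. \<integral>x. (norm x)\<^sup>2 * \<rho> i x \<partial>lborel)"
    using \<rho> assms(1,4) by (intro sum_pos) (auto simp: Gamma_iff_admissible_density intro!: second_moment_pos)
  then have "F0 n a (\<lambda>i. dilate 2 (\<rho> i)) < F0 n a \<rho>"
    using F0_dilate[OF \<rho>, of 2 a] assms(5) by simp
  moreover have "F0 n a \<rho> \<le> F0 n a (\<lambda>i. dilate 2 (\<rho> i))"
    using min dilate_in_Gamma[OF \<rho>, of 2] by simp
  ultimately show False by simp
qed

end
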